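(* Let $\sigma$ be a permutation of $\mathbb{N}$ and let $\tilde\sigma$ be its extension to $\mathbb{Z}$ by the identity, i.e. $\tilde\sigma(k)=\sigma(k)$ for $k\in\mathbb{N}$ and $\tilde\sigma(k)=k$ otherwise. Then $$\mathrm{RW}(\tilde\sigma)=\mathrm{BST}(\sigma)\cup\bigcup_{k<0}\{1^k\}=\mathrm{BST}(\sigma)\cup\bigcup_{k\in\mathbb{N}}\{\Upsilon^k\},$$ and consequently $\mathrm{RW}(\tilde\sigma)\cap\mathbb{T}=\mathrm{BST}(\sigma)$.
   Context: $\mathbb{N}=\{1,2,\dots\}$. $\mathbb{T}$ is the set of finite words over $\{0,1\}$ with empty word $\varnothing$; $aS=\{aw:w\in S\}$. For a finite sequence $x=(x_1,\dots,x_m)$ of distinct numbers, $\mathrm{BST}(x)=\emptyset$ if $m=0$, else $\{\varnothing\}\cup0\,\mathrm{BST}(x_-)\cup1\,\mathrm{BST}(x_+)$, $x_-$ (resp. $x_+$) the subsequence of entries smaller (resp. larger) than $x_1$ in original order; for infinite $x$, $\mathrm{BST}(x)=\bigcup_m\mathrm{BST}(x_1,\dots,x_m)$; $\mathrm{BST}(\sigma)=\mathrm{BST}(\sigma(1),\sigma(2),\dots)$. Extended words: add a letter $\Upsilon$ with $1^k=1\cdots1$ ($k$ letters) for $k>0$, $1^0=\varnothing$, $1^k=\Upsilon^{|k|}$ for $k<0$. Redwood tree: an injective $\sigma:\mathbb{Z}\to\mathbb{Z}$ is admissible if $|\{i\in\mathbb{N}:\sigma(i)\notin\mathbb{N}\}|+|\{i\in\mathbb{Z}\setminus\mathbb{N}:\sigma(i)\in\mathbb{N}\}|<\infty$;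 a record index is $r$ with $\sigma(r)>\sigma(k)$ for all $k<r$; the standard record representation is the increasing enumeration $(r_k)_{k\in\mathbb{Z}}$ of record indices with $\sigma(r_0)\le0<\sigma(r_1)$; $\sigma[k]$ is the sequence of values $\sigma(i)$ with $\sigma(r_k)<\sigma(i)<\sigma(r_{k+1})$ in increasing order of $i$; $\mathrm{RW}(\sigma)=\bigcup_{k\in\mathbb{Z}}(\{1^k\}\cup1^k0\,\mathrm{BST}(\sigma[k]))$. *)

theory Defs
  imports Main
begin

datatype letter = L0 | L1 | Ups

type_synonym word = "letter list"

definition TT :: "word set" where
  "TT = {w. Ups \<notin> set w}"

definition one_pow :: "int \<Rightarrow> word" where
  "one_pow k = (if k \<ge> 0 then replicate (nat k) L1 else replicate (nat (- k)) Ups)"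

function bst :: "'a::linorder list \<Rightarrow> word set" where
  "bst [] = {}"
| "bst (x # xs) = insert [] ((Cons L0) ` bst (filter (\<lambda>y. y < x) xs)
                            \<union> (Cons L1) ` bst (filter (\<lambda>y. y > x) xs))"
  by pat_completeness auto
termination
  by (relation "measure length") (auto simp: le_imp_less_Suc)

text \<open>BST of an infinite sequence x_1, x_2, ... given by s (indices from 1).\<close>
definition bst_seq :: "(nat \<Rightarrow> 'a::linorder) \<Rightarrow> word set" where
  "bst_seq s = (\<Union>m. bst (map s [1..<m+1]))"

definition is_record :: "(int \<Rightarrow> int) \<Rightarrow> int \<Rightarrow> bool" where
  "is_record \<sigma> r \<longleftrightarrow> (\<forall>k<r. \<sigma> r > \<sigma> k)"

definition std_record_rep :: "(int \<Rightarrow> int) \<Rightarrow> (int \<Rightarrow> int) \<Rightarrow> bool" where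
  "std_record_rep \<sigma> r \<longleftrightarrow> strict_mono r \<and> range r = {i. is_record \<sigma> i}
      \<and> \<sigma> (r 0) \<le> 0 \<and> 0 < \<sigma> (r 1)"

definition rec_rep :: "(int \<Rightarrow> int) \<Rightarrow> int \<Rightarrow> int" where
  "rec_rep \<sigma> = (SOME r. std_record_rep \<sigma> r)"

definition gap_seq :: "(int \<Rightarrow> int) \<Rightarrow> int \<Rightarrow> int list" where
  "gap_seq \<sigma> k = (let r = rec_rep \<sigma> in
     map \<sigma> (sorted_list_of_set {i. \<sigma> (r k) < \<sigma> i \<and> \<sigma> i < \<sigma> (r (k+1))}))"

definition RW :: "(int \<Rightarrow> int) \<Rightarrow> word set" where
  "RW \<sigma> = (\<Union>k. {one_pow k} \<union> (\<lambda>w. one_pow k @ L0 # w) ` bst (gap_seq \<sigma> k))"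

text \<open>Extension of sigma : N -> N (N = {1,2,...}) to Z by the identity.\<close>
definition ext_id :: "(nat \<Rightarrow> nat) \<Rightarrow> int \<Rightarrow> int" where
  "ext_id \<sigma> k = (if k \<ge> 1 then int (\<sigma> (nat k)) else k)"

end

theory Submission
  imports Defs "HOL-Library.Sublist" "HOL-Library.Infinite_Set"
begin

text \<open>
  The right spine of BST(x_1, ..., x_m) consists of the left-to-right maxima of x, and the left
  subtree hanging off the j-th spine node 1^j is the BST of the entries lying strictly between
  the (j-1)-st and the j-th maximum, in their original order.

  For \<tau> = ext_id \<sigma> the records are all nonpositive indices together with the
  left-to-right maxima of \<sigma>, of which a permutation has infinitely many. Hence \<tau>[k] is
  empty for k < 0, and for k \<ge> 0 it consists of the values between the k-th and (k+1)-st
  maximum of \<sigma>. Every prefix of \<sigma> shows a prefix of \<tau>[k] below the spine node 1^k,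
  and since \<tau>[k] is finite, long prefixes show all of it. So the union over all prefixes,
  BST(\<sigma>), is the part of RW(\<tau>) indexed by k \<ge> 0, while each k < 0 only contributes
  the word \<Upsilon>^|k|.
\<close>

text \<open>RW is a union of the pieces graft_left (one_pow k) (bst (gap_seq \<sigma> k)).\<close>
definition graft_left :: "word \<Rightarrow> word set \<Rightarrow> word set" where
  "graft_left u S = insert u ((\<lambda>v. u @ L0 # v) ` S)"

lemma UN_graft_left:
  "A \<noteq> {} \<Longrightarrow> (\<Union>m\<in>A. graft_left u (S m)) = graft_left u (\<Union>m\<in>A. S m)"
  by (auto simp: graft_left_def)

lemma Cons_L1_graft_left:
  "Cons L1 ` graft_left (replicate j L1) S = graft_left (replicate (Suc j) L1) S"
  by (auto simp: graft_left_def image_image)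

lemma bst_subset_TT: "bst xs \<subseteq> TT"
  by (induction xs rule: bst.induct) (auto simp: TT_def)

lemma bst_map_order_embedding:
  assumes "\<And>x y. f x < f y \<longleftrightarrow> x < y"
  shows "bst (map f xs) = bst xs"
proof (induction xs rule: bst.induct)
  case (2 x xs)
  have "filter (\<lambda>y. y < f x) (map f xs) = map f (filter (\<lambda>y. y < x) xs)"
    and "filter (\<lambda>y. y > f x) (map f xs) = map f (filter (\<lambda>y. y > x) xs)"
    by (simp_all add: filter_map o_def assms)
  with 2 show ?case by simp
qed simp

lemma bst_prefix_mono: "prefix ys xs \<Longrightarrow> bst ys \<subseteq> bst xs"
proof (induction ys arbitrary: xs rule: bst.induct)
  case (2 y ys)
  then obtain xs' where xs: "xs = y # xs'" and "prefix ys xs'"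
    by (cases xs) auto
  then have "bst (filter (\<lambda>z. z < y) ys) \<subseteq> bst (filter (\<lambda>z. z < y) xs')"
    and "bst (filter (\<lambda>z. z > y) ys) \<subseteq> bst (filter (\<lambda>z. z > y) xs')"
    using 2 filter_mono_prefix by blast+
  with xs show ?case by auto
qed simp

fun left_maxima :: "'a::linorder list \<Rightarrow> 'a list" where
  "left_maxima [] = []"
| "left_maxima (x # xs) = x # left_maxima (filter (\<lambda>y. y > x) xs)"

lemma set_left_maxima_subset: "set (left_maxima xs) \<subseteq> set xs"
  by (induction xs rule: left_maxima.induct) auto

lemma left_maxima_snoc:
  "left_maxima (xs @ [y]) = (if \<forall>x\<in>set xs. x < y then left_maxima xs @ [y] else left_maxima xs)"
  by (induction xs rule: left_maxima.induct) auto

text \<open>For s = left_maxima xs this selects the finite analogue of \<sigma>[j]: the entries between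
  the (j-1)-st and j-th left-to-right maximum, with no lower bound for j = 0.\<close>
definition between_maxima :: "'a::linorder list \<Rightarrow> nat \<Rightarrow> 'a \<Rightarrow> bool" where
  "between_maxima s j y \<longleftrightarrow> (j = 0 \<or> s ! (j - 1) < y) \<and> y < s ! j"

lemma filter_between_maxima_Cons_Suc:
  assumes "j < length (left_maxima (filter (\<lambda>y. y > x) xs))"
  shows "filter (between_maxima (x # left_maxima (filter (\<lambda>y. y > x) xs)) (Suc j)) (x # xs)
       = filter (between_maxima (left_maxima (filter (\<lambda>y. y > x) xs)) j) (filter (\<lambda>y. y > x) xs)"
proof -
  let ?s = "left_maxima (filter (\<lambda>y. y > x) xs)"
  have gt: "\<And>i. i < length ?s \<Longrightarrow> ?s ! i > x"
    using set_left_maxima_subset nth_mem by fastforce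
  show ?thesis
    using gt[OF assms] gt[of "j - 1"] assms
    by (cases j) (auto simp: between_maxima_def intro!: filter_cong)
qed

lemma bst_eq_UN_left_maxima:
  "bst xs = (\<Union>j<length (left_maxima xs).
     graft_left (replicate j L1) (bst (filter (between_maxima (left_maxima xs) j) xs)))"
proof (induction xs rule: bst.induct)
  case (2 x xs)
  let ?R = "filter (\<lambda>y. y > x) xs"
  let ?S = "\<lambda>s j ys. bst (filter (between_maxima s j) ys)"
  have "filter (between_maxima (x # left_maxima ?R) 0) (x # xs) = filter (\<lambda>y. y < x) xs"
    by (auto simp: between_maxima_def intro!: filter_cong)
  then have root: "graft_left [] (?S (left_maxima (x # xs)) 0 (x # xs))
      = insert [] (Cons L0 ` bst (filter (\<lambda>y. y < x) xs))"
    by (simp add: graft_left_def)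
  have "(\<Union>j<length (left_maxima ?R).
          graft_left (replicate (Suc j) L1) (?S (left_maxima (x # xs)) (Suc j) (x # xs)))
      = (\<Union>j<length (left_maxima ?R). Cons L1 ` graft_left (replicate j L1) (?S (left_maxima ?R) j ?R))"
    by (intro SUP_cong) (simp_all only: left_maxima.simps Cons_L1_graft_left
        filter_between_maxima_Cons_Suc lessThan_iff)
  also have "\<dots> = Cons L1 ` bst ?R"
    using 2(2) by (simp only: image_UN)
  finally show ?case
    using root by (simp add: lessThan_Suc_eq_insert_0 SUP_image o_def)
qed simp

lemma sorted_list_of_set_eq_filter:
  assumes "sorted_wrt (<) xs" "A \<subseteq> set xs"
  shows "sorted_list_of_set A = filter (\<lambda>x. x \<in> A) xs"
proof (rule strict_sorted_equal)
  show "sorted_wrt (<) (filter (\<lambda>x. x \<in> A) xs)"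
    using assms(1) sorted_wrt_filter by blast
  show "sorted_wrt (<) (sorted_list_of_set A)"
    by simp
  have "finite A"
    using assms(2) finite_subset by blast
  then show "set (sorted_list_of_set A) = set (filter (\<lambda>x. x \<in> A) xs)"
    using assms(2) by auto
qed

lemma strict_mono_enumerate_extension:
  fixes P :: "nat set"
  assumes P: "infinite P" "0 \<notin> P"
  defines "e \<equiv> \<lambda>k::int. if k \<le> 0 then k else int (enumerate P (nat k - 1))"
  shows "strict_mono e" and "range e = {..0} \<union> int ` P"
proof -
  have pos: "enumerate P n > 0" for n
    using enumerate_in_set[OF P(1)] P(2) by (metis gr0I)
  show "strict_mono e"
  proof (rule strict_monoI)
    fix a b :: int
    assume "a < b"
    then show "e a < e b"
      using pos[of "nat b - 1"] enumerate_mono[OF _ P(1), of "nat a - 1" "nat b - 1"]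
      by (auto simp: e_def)
  qed
  have "int p \<in> range e" if p: "p \<in> P" for p
  proof -
    obtain n where "enumerate P n = p"
      using enumerate_Ex[OF P(1) p] by blast
    then have "e (int n + 1) = int p"
      by (simp add: e_def nat_add_distrib)
    then show ?thesis
      by (metis rangeI)
  qed
  moreover have "k \<in> range e" if "k \<le> 0" for k
    using that by (metis e_def rangeI)
  moreover have "range e \<subseteq> {..0} \<union> int ` P"
    using enumerate_in_set[OF P(1)] by (auto simp: e_def)
  ultimately show "range e = {..0} \<union> int ` P"
    by blast
qed

lemma UN_one_pow_neg: "(\<Union>k\<in>{k::int. k < 0}. {one_pow k}) = (\<Union>k\<in>{1::nat..}. {replicate k Ups})"
proof -
  have "one_pow ` {k. k < 0} = (\<lambda>k. replicate k Ups) ` {1..}"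
  proof (intro equalityI image_subsetI)
    show "one_pow k \<in> (\<lambda>k. replicate k Ups) ` {1..}" if "k \<in> {k. k < 0}" for k
      using that by (auto simp: one_pow_def intro!: image_eqI[of _ _ "nat (- k)"])
    show "replicate k Ups \<in> one_pow ` {k. k < 0}" if "k \<in> {1..}" for k
      using that by (auto simp: one_pow_def intro!: image_eqI[of _ _ "- int k"])
  qed
  then show ?thesis
    by blast
qed

lemma bst_seq_subset_TT: "bst_seq s \<subseteq> TT"
  unfolding bst_seq_def using bst_subset_TT by blast

locale nat_permutation =
  fixes \<sigma> :: "nat \<Rightarrow> nat"
  assumes bij: "bij_betw \<sigma> {1..} {1..}"
begin

abbreviation \<tau> :: "int \<Rightarrow> int" where
  "\<tau> \<equiv> ext_id \<sigma>"

lemma ext_id_nonpos_iff: "\<tau> i \<le> 0 \<longleftrightarrow> i \<le> 0"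
  using bij_betwE[OF bij, rule_format, of "nat i"] by (force simp: ext_id_def)

lemma ext_id_of_nat: "n \<ge> 1 \<Longrightarrow> \<tau> (int n) = int (\<sigma> n)"
  by (simp add: ext_id_def)

lemma inj_ext_id: "inj \<tau>"
proof (rule injI)
  fix a b
  assume eq: "\<tau> a = \<tau> b"
  then have "a \<le> 0 \<longleftrightarrow> b \<le> 0"
    by (metis ext_id_nonpos_iff)
  moreover have "\<sigma> (nat a) = \<sigma> (nat b) \<Longrightarrow> nat a = nat b" if "a \<ge> 1" "b \<ge> 1"
    using bij_betw_imp_inj_on[OF bij] that by (simp add: inj_on_def)
  ultimately show "a = b"
    using eq by (auto simp: ext_id_def split: if_splits)
qed

lemma is_record_nonpos: "i \<le> 0 \<Longrightarrow> is_record \<tau> i"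
  by (auto simp: is_record_def ext_id_def)

lemma is_record_of_nat_iff:
  assumes "n \<ge> 1"
  shows "is_record \<tau> (int n) \<longleftrightarrow> (\<forall>j\<in>{1..<n}. \<sigma> j < \<sigma> n)"
proof
  assume rec: "is_record \<tau> (int n)"
  show "\<forall>j\<in>{1..<n}. \<sigma> j < \<sigma> n"
  proof
    fix j
    assume j: "j \<in> {1..<n}"
    then have "\<tau> (int j) < \<tau> (int n)"
      using rec by (simp add: is_record_def)
    then show "\<sigma> j < \<sigma> n"
      using j assms by (simp add: ext_id_of_nat)
  qed
next
  assume below: "\<forall>j\<in>{1..<n}. \<sigma> j < \<sigma> n"
  have "\<tau> k < \<tau> (int n)" if "k < int n" for k
  proof (cases "k \<ge> 1")
    case True
    then have "nat k \<in> {1..<n}"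
      using that by auto
    then show ?thesis
      using True below assms by (simp add: ext_id_def)
  next
    case False
    then show ?thesis
      using assms ext_id_nonpos_iff[of "int n"] by (simp add: ext_id_def)
  qed
  then show "is_record \<tau> (int n)"
    by (simp add: is_record_def)
qed

lemma infinite_records: "infinite {n. n \<ge> 1 \<and> is_record \<tau> (int n)}"
  unfolding infinite_nat_iff_unbounded
proof
  fix M :: nat
  define V where "V = Max (\<sigma> ` {1..M})"
  have "V + 1 \<in> \<sigma> ` {1..}"
    using bij_betw_imp_surj_on[OF bij] by simp
  then have ex: "\<exists>n. n \<ge> 1 \<and> \<sigma> n > V"
    by force
  define i where "i = (LEAST n. n \<ge> 1 \<and> \<sigma> n > V)"
  have i: "i \<ge> 1" "\<sigma> i > V"
    using LeastI_ex[OF ex] by (simp_all add: i_def)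
  have "\<sigma> j \<le> V" if "j \<ge> 1" "j < i" for j
    using not_less_Least[of j "\<lambda>n. n \<ge> 1 \<and> \<sigma> n > V"] that by (simp add: i_def)
  then have "is_record \<tau> (int i)"
    using i is_record_of_nat_iff by fastforce
  moreover have "i > M"
  proof (rule ccontr)
    assume "\<not> i > M"
    then have "\<sigma> i \<le> V"
      using i(1) by (simp add: V_def)
    then show False
      using i(2) by simp
  qed
  ultimately show "\<exists>n>M. n \<in> {n. n \<ge> 1 \<and> is_record \<tau> (int n)}"
    using i(1) by blast
qed

lemma std_record_rep_rec_rep: "std_record_rep \<tau> (rec_rep \<tau>)"
proof -
  let ?P = "{n. n \<ge> 1 \<and> is_record \<tau> (int n)}"
  define e where "e = (\<lambda>k::int. if k \<le> 0 then k else int (enumerate ?P (nat k - 1)))"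
  have mono: "strict_mono e" and range: "range e = {..0} \<union> int ` ?P"
    using strict_mono_enumerate_extension[OF infinite_records] unfolding e_def by auto
  have "{..0} \<union> int ` ?P = {i. is_record \<tau> i}"
  proof (intro equalityI subsetI)
    fix i
    assume "i \<in> {i. is_record \<tau> i}"
    then show "i \<in> {..0} \<union> int ` ?P"
      by (cases "i \<le> 0") (auto simp: image_iff intro!: exI[of _ "nat i"])
  qed (use is_record_nonpos in auto)
  moreover have "\<tau> (e 0) \<le> 0"
    by (simp add: e_def ext_id_def)
  moreover have "0 < \<tau> (e 1)"
    using strict_monoD[OF mono, of 0 1] ext_id_nonpos_iff[of "e 1"] by (simp add: e_def)
  ultimately have "std_record_rep \<tau> e"
    using mono range by (simp add: std_record_rep_def)
  then show ?thesis
    unfolding rec_rep_def by (rule someI[of "std_record_rep \<tau>"])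
qed

abbreviation r :: "int \<Rightarrow> int" where
  "r \<equiv> rec_rep \<tau>"

lemma strict_mono_r: "strict_mono r"
  using std_record_rep_rec_rep by (simp add: std_record_rep_def)

lemma range_r: "range r = {i. is_record \<tau> i}"
  using std_record_rep_rec_rep by (simp add: std_record_rep_def)

lemma is_record_r: "is_record \<tau> (r k)"
  using range_r rangeI[of r k] by blast

lemma is_record_imp_r: "is_record \<tau> i \<Longrightarrow> \<exists>k. i = r k"
  using range_r by blast

lemma ext_id_r_0: "\<tau> (r 0) \<le> 0"
  using std_record_rep_rec_rep by (simp add: std_record_rep_def)

lemma r_less_iff: "r a < r b \<longleftrightarrow> a < b"
  by (rule strict_mono_less[OF strict_mono_r])

lemma r_le_iff: "r a \<le> r b \<longleftrightarrow> a \<le> b"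
  by (rule strict_mono_less_eq[OF strict_mono_r])

lemma ext_id_r_less_iff: "\<tau> (r a) < \<tau> (r b) \<longleftrightarrow> a < b"
proof -
  have "strict_mono (\<tau> \<circ> r)"
  proof (rule strict_monoI)
    fix a b :: int
    assume "a < b"
    then have "r a < r b"
      by (simp add: r_less_iff)
    then show "(\<tau> \<circ> r) a < (\<tau> \<circ> r) b"
      using is_record_r[of b] by (simp add: is_record_def)
  qed
  then show ?thesis
    using strict_mono_less[of "\<tau> \<circ> r"] by simp
qed

lemma r_pos: "k \<ge> 1 \<Longrightarrow> r k \<ge> 1"
proof -
  assume "k \<ge> 1"
  moreover have "r 1 \<ge> 1"
    using std_record_rep_rec_rep ext_id_nonpos_iff[of "r 1"] by (simp add: std_record_rep_def)
  ultimately show "r k \<ge> 1"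
    using r_le_iff[of 1 k] by linarith
qed

lemma not_record_between_r: "r k < i \<Longrightarrow> i < r (k + 1) \<Longrightarrow> \<not> is_record \<tau> i"
  using is_record_imp_r r_less_iff by fastforce

definition gap :: "int \<Rightarrow> int set" where
  "gap k = {i. \<tau> (r k) < \<tau> i \<and> \<tau> i < \<tau> (r (k + 1))}"

lemma gap_seq_eq: "gap_seq \<tau> k = map \<tau> (sorted_list_of_set (gap k))"
  by (simp add: gap_seq_def gap_def Let_def)

lemma gap_pos:
  assumes "i \<in> gap k"
  shows "i \<ge> 1"
proof (rule ccontr)
  assume "\<not> i \<ge> 1"
  then obtain l where "i = r l"
    using is_record_nonpos is_record_imp_r by fastforce
  then show False
    using assms ext_id_r_less_iff by (auto simp: gap_def)
qed

lemma gap_neg: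
  assumes "k < 0"
  shows "gap k = {}"
proof -
  have "\<tau> (r (k + 1)) \<le> \<tau> (r 0)"
    using ext_id_r_less_iff[of 0 "k + 1"] assms by linarith
  have "i \<notin> gap k" for i
  proof
    assume i: "i \<in> gap k"
    then have "\<tau> i \<le> 0"
      using \<open>\<tau> (r (k + 1)) \<le> \<tau> (r 0)\<close> ext_id_r_0 by (simp add: gap_def)
    then show False
      using gap_pos[OF i] ext_id_nonpos_iff by simp
  qed
  then show ?thesis
    by blast
qed

lemma gap_bounded: "\<exists>M. gap k \<subseteq> {1..int M}"
proof -
  have "gap k \<subseteq> \<tau> -` {\<tau> (r k)<..<\<tau> (r (k + 1))}"
    by (auto simp: gap_def)
  moreover have "finite (\<tau> -` {\<tau> (r k)<..<\<tau> (r (k + 1))})"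
    using inj_ext_id by (intro finite_vimageI) auto
  ultimately have "finite (gap k)"
    by (rule finite_subset)
  then have "gap k \<subseteq> {1..int (nat (Max (gap k)))}"
    using Max_ge gap_pos by fastforce
  then show ?thesis
    by blast
qed

definition init_seg :: "nat \<Rightarrow> nat list" where
  "init_seg m = map \<sigma> [1..<m + 1]"

lemma init_seg_Suc: "init_seg (Suc m) = init_seg m @ [\<sigma> (Suc m)]"
  by (simp add: init_seg_def)

lemma all_init_seg_less_iff_is_record:
  "(\<forall>x\<in>set (init_seg m). x < \<sigma> (Suc m)) \<longleftrightarrow> is_record \<tau> (int (Suc m))"
  using is_record_of_nat_iff[of "Suc m"] by (auto simp: init_seg_def)

lemma left_maxima_init_seg:
  "\<exists>t. left_maxima (init_seg m) = map (\<lambda>j. \<sigma> (nat (r (int j)))) [1..<t + 1]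
     \<and> r (int t) \<le> int m \<and> int m < r (int t + 1)"
proof (induction m)
  case 0
  have "r 0 \<le> 0"
    using ext_id_r_0 ext_id_nonpos_iff by blast
  then show ?case
    using r_pos[of 1] by (intro exI[of _ 0]) (simp add: init_seg_def)
next
  case (Suc m)
  then obtain t where t: "left_maxima (init_seg m) = map (\<lambda>j. \<sigma> (nat (r (int j)))) [1..<t + 1]"
    "r (int t) \<le> int m" "int m < r (int t + 1)"
    by blast
  show ?case
  proof (cases "is_record \<tau> (int (Suc m))")
    case True
    then have "r (int t + 1) = int (Suc m)"
      using not_record_between_r[of "int t" "int (Suc m)"] t(2,3) by fastforce
    then have next_r: "r (int (Suc t)) = int (Suc m)"
      by (simp add: add.commute)
    have "left_maxima (init_seg (Suc m)) = left_maxima (init_seg m) @ [\<sigma> (Suc m)]"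
      using True by (simp add: init_seg_Suc left_maxima_snoc all_init_seg_less_iff_is_record)
    also have "\<dots> = map (\<lambda>j. \<sigma> (nat (r (int j)))) [1..<t + 1] @ [\<sigma> (nat (r (int (Suc t))))]"
      by (simp only: t(1) next_r nat_int)
    also have "\<dots> = map (\<lambda>j. \<sigma> (nat (r (int j)))) [1..<Suc t + 1]"
      by simp
    finally show ?thesis
      using next_r r_less_iff[of "int (Suc t)" "int (Suc t) + 1"] by (intro exI[of _ "Suc t"]) simp
  next
    case False
    then have "int (Suc m) \<noteq> r (int t + 1)"
      using is_record_r by metis
    moreover have "left_maxima (init_seg (Suc m)) = left_maxima (init_seg m)"
      using False by (simp add: init_seg_Suc left_maxima_snoc all_init_seg_less_iff_is_record)
    ultimately show ?thesis
      using t by (intro exI[of _ t]) simp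
  qed
qed

lemma less_length_left_maxima_init_seg_iff:
  "j < length (left_maxima (init_seg m)) \<longleftrightarrow> r (int j + 1) \<le> int m"
proof -
  obtain t where t: "left_maxima (init_seg m) = map (\<lambda>j. \<sigma> (nat (r (int j)))) [1..<t + 1]"
    "r (int t) \<le> int m" "int m < r (int t + 1)"
    using left_maxima_init_seg by blast
  have "j < t \<longleftrightarrow> r (int j + 1) \<le> int m"
  proof
    assume "j < t"
    then have "r (int j + 1) \<le> r (int t)"
      using r_le_iff by simp
    then show "r (int j + 1) \<le> int m"
      using t(2) by linarith
  next
    assume "r (int j + 1) \<le> int m"
    then have "r (int j + 1) < r (int t + 1)"
      using t(3) by linarith
    then show "j < t"
      using r_less_iff by simp
  qed
  then show ?thesis
    using t(1) by (simp del: upt_Suc)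
qed

lemma nth_left_maxima_init_seg:
  assumes "j < length (left_maxima (init_seg m))"
  shows "int (left_maxima (init_seg m) ! j) = \<tau> (r (int (Suc j)))"
proof -
  obtain t where "left_maxima (init_seg m) = map (\<lambda>j. \<sigma> (nat (r (int j)))) [1..<t + 1]"
    using left_maxima_init_seg by blast
  then have "left_maxima (init_seg m) ! j = \<sigma> (nat (r (int (Suc j))))"
    using assms by (simp del: upt_Suc add: add.commute)
  moreover have "r (int (Suc j)) \<ge> 1"
    using r_pos by simp
  ultimately show ?thesis
    by (simp add: ext_id_def)
qed

lemma between_maxima_init_seg_iff:
  assumes j: "j < length (left_maxima (init_seg m))" and n: "n \<ge> 1"
  shows "between_maxima (left_maxima (init_seg m)) j (\<sigma> n) \<longleftrightarrow> int n \<in> gap (int j)"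
proof -
  let ?s = "left_maxima (init_seg m)"
  have "between_maxima ?s j (\<sigma> n)
      \<longleftrightarrow> (j = 0 \<or> int (?s ! (j - 1)) < \<tau> (int n)) \<and> \<tau> (int n) < int (?s ! j)"
    using n by (simp add: between_maxima_def ext_id_of_nat)
  moreover have "\<tau> (r 0) < \<tau> (int n)"
    using ext_id_r_0 ext_id_nonpos_iff[of "int n"] n by linarith
  ultimately show ?thesis
    using nth_left_maxima_init_seg[OF j] nth_left_maxima_init_seg[of "j - 1" m] j
    by (cases j) (auto simp: gap_def)
qed

definition gap_upto :: "nat \<Rightarrow> int \<Rightarrow> int list" where
  "gap_upto m k = map \<tau> (filter (\<lambda>i. i \<in> gap k) (map int [1..<m + 1]))"

lemma filter_between_maxima_init_seg:
  assumes "j < length (left_maxima (init_seg m))"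
  shows "map int (filter (between_maxima (left_maxima (init_seg m)) j) (init_seg m)) = gap_upto m (int j)"
proof -
  define s where "s = left_maxima (init_seg m)"
  have filter_eq: "filter (\<lambda>n. between_maxima s j (\<sigma> n)) [1..<m + 1]
      = filter (\<lambda>n. int n \<in> gap (int j)) [1..<m + 1]"
    using between_maxima_init_seg_iff[OF assms] by (intro filter_cong) (auto simp: s_def simp del: upt_Suc)
  have map_eq: "map (\<lambda>n. int (\<sigma> n)) (filter (\<lambda>n. int n \<in> gap (int j)) [1..<m + 1])
      = map (\<lambda>n. \<tau> (int n)) (filter (\<lambda>n. int n \<in> gap (int j)) [1..<m + 1])"
    by (intro map_cong) (auto simp: ext_id_of_nat simp del: upt_Suc)
  from filter_eq map_eq show ?thesis
    unfolding s_def[symmetric] by (simp add: init_seg_def gap_upto_def filter_map o_def del: upt_Suc)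
qed

lemma prefix_gap_upto:
  assumes "m \<le> M"
  shows "prefix (gap_upto m k) (gap_upto M k)"
proof -
  have "[1..<M + 1] = [1..<m + 1] @ [m + 1..<M + 1]"
    using assms upt_add_eq_append[of 1 "m + 1" "M - m"] by (simp del: upt_Suc)
  then have "prefix [1..<m + 1] [1..<M + 1]"
    by (metis prefixI)
  then show ?thesis
    unfolding gap_upto_def by (intro map_mono_prefix filter_mono_prefix)
qed

lemma gap_seq_eq_gap_upto:
  assumes "gap k \<subseteq> {1..int M}"
  shows "gap_seq \<tau> k = gap_upto M k"
proof -
  have "{1..int M} \<subseteq> set (map int [1..<M + 1])"
  proof
    fix i
    assume "i \<in> {1..int M}"
    then have "nat i \<in> set [1..<M + 1]" "i = int (nat i)"
      by (auto simp del: upt_Suc)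
    then show "i \<in> set (map int [1..<M + 1])"
      by (metis imageI set_map)
  qed
  then have "gap k \<subseteq> set (map int [1..<M + 1])"
    using assms by blast
  moreover have "sorted_wrt (<) (map int [1..<M + 1])"
    by (simp add: sorted_wrt_map del: upt_Suc)
  ultimately have "sorted_list_of_set (gap k) = filter (\<lambda>i. i \<in> gap k) (map int [1..<M + 1])"
    by (rule sorted_list_of_set_eq_filter[rotated])
  then show ?thesis
    by (simp add: gap_seq_eq gap_upto_def)
qed

lemma UN_bst_gap_upto:
  "(\<Union>m\<in>{m. r (int j + 1) \<le> int m}. bst (gap_upto m (int j))) = bst (gap_seq \<tau> (int j))"
  (is "(\<Union>m\<in>?A. _) = _")
proof -
  obtain M where M: "gap (int j) \<subseteq> {1..int M}"
    using gap_bounded by blast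
  have gap_seq_eq: "gap_seq \<tau> (int j) = gap_upto M' (int j)" if "M \<le> M'" for M'
  proof -
    have "{1..int M} \<subseteq> {1..int M'}"
      using that by simp
    then show ?thesis
      using M gap_seq_eq_gap_upto by blast
  qed
  show ?thesis
  proof
    have "bst (gap_upto m (int j)) \<subseteq> bst (gap_seq \<tau> (int j))" for m
      using bst_prefix_mono[OF prefix_gap_upto[of m "max m M"]] gap_seq_eq[of "max m M"] by simp
    then show "(\<Union>m\<in>?A. bst (gap_upto m (int j))) \<subseteq> bst (gap_seq \<tau> (int j))"
      by (rule UN_least)
    have "max M (nat (r (int j + 1))) \<in> ?A"
      by simp
    then show "bst (gap_seq \<tau> (int j)) \<subseteq> (\<Union>m\<in>?A. bst (gap_upto m (int j)))"
      unfolding gap_seq_eq[of "max M (nat (r (int j + 1)))", OF max.cobounded1] by (rule UN_upper)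
  qed
qed

lemma bst_filter_between_maxima_init_seg:
  assumes "j < length (left_maxima (init_seg m))"
  shows "bst (filter (between_maxima (left_maxima (init_seg m)) j) (init_seg m))
       = bst (gap_upto m (int j))"
  by (simp flip: filter_between_maxima_init_seg[OF assms] add: bst_map_order_embedding)

lemma bst_init_seg_eq_UN_gap_upto:
  "bst (init_seg m) = (\<Union>j\<in>{j. r (int j + 1) \<le> int m}.
     graft_left (replicate j L1) (bst (gap_upto m (int j))))"
proof -
  have "bst (init_seg m) = (\<Union>j<length (left_maxima (init_seg m)).
      graft_left (replicate j L1)
        (bst (filter (between_maxima (left_maxima (init_seg m)) j) (init_seg m))))"
    by (rule bst_eq_UN_left_maxima)
  also have "\<dots> = (\<Union>j\<in>{j. r (int j + 1) \<le> int m}.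
      graft_left (replicate j L1) (bst (gap_upto m (int j))))"
    by (rule SUP_cong) (simp_all add: less_length_left_maxima_init_seg_iff
        bst_filter_between_maxima_init_seg lessThan_def)
  finally show ?thesis .
qed

lemma bst_seq_eq_UN_gap_seq:
  "bst_seq \<sigma> = (\<Union>j. graft_left (replicate j L1) (bst (gap_seq \<tau> (int j))))"
proof -
  let ?A = "\<lambda>j. {m. r (int j + 1) \<le> int m}"
  have "bst_seq \<sigma> = (\<Union>m. bst (init_seg m))"
    by (simp add: bst_seq_def init_seg_def)
  also have "\<dots> = (\<Union>j. \<Union>m\<in>?A j. graft_left (replicate j L1) (bst (gap_upto m (int j))))"
    unfolding bst_init_seg_eq_UN_gap_upto by blast
  also have "\<dots> = (\<Union>j. graft_left (replicate j L1) (bst (gap_seq \<tau> (int j))))"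
  proof -
    have "?A j \<noteq> {}" for j
      by (auto intro!: exI[of _ "nat (r (int j + 1))"])
    then show ?thesis
      by (simp add: UN_graft_left UN_bst_gap_upto)
  qed
  finally show ?thesis .
qed

lemma RW_ext_id_eq_UN_gap_seq:
  "RW \<tau> = (\<Union>k\<in>{k. k < 0}. {one_pow k})
     \<union> (\<Union>j. graft_left (replicate j L1) (bst (gap_seq \<tau> (int j))))"
proof -
  let ?F = "\<lambda>k. graft_left (one_pow k) (bst (gap_seq \<tau> k))"
  have RW: "RW \<tau> = (\<Union>k. ?F k)"
    by (simp add: RW_def graft_left_def)
  have "k < 0 \<or> k \<in> range int" for k :: int
    by (metis nonneg_int_cases not_less rangeI)
  then have "{k::int. k < 0} \<union> range int = UNIV"
    by blast
  then have "RW \<tau> = \<Union> (?F ` ({k. k < 0} \<union> range int))"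
    unfolding RW by simp
  also have "\<dots> = (\<Union>k\<in>{k. k < 0}. ?F k) \<union> (\<Union>j. ?F (int j))"
    by (simp only: image_Un Union_Un_distrib image_image)
  also have "(\<Union>k\<in>{k. k < 0}. ?F k) = (\<Union>k\<in>{k. k < 0}. {one_pow k})"
    by (rule SUP_cong) (simp_all add: gap_seq_eq gap_neg graft_left_def)
  also have "(\<Union>j. ?F (int j)) = (\<Union>j. graft_left (replicate j L1) (bst (gap_seq \<tau> (int j))))"
    by (simp add: one_pow_def)
  finally show ?thesis .
qed

lemma RW_ext_id: "RW \<tau> = bst_seq \<sigma> \<union> (\<Union>k\<in>{k::int. k < 0}. {one_pow k})"
  unfolding RW_ext_id_eq_UN_gap_seq bst_seq_eq_UN_gap_seq by (rule Un_commute)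

end

theorem lemma2p4:
  fixes \<sigma> :: "nat \<Rightarrow> nat"
  assumes "bij_betw \<sigma> {1..} {1..}"
  shows "RW (ext_id \<sigma>) = bst_seq \<sigma> \<union> (\<Union>k\<in>{k::int. k < 0}. {one_pow k})
       \<and> RW (ext_id \<sigma>) = bst_seq \<sigma> \<union> (\<Union>k\<in>{1::nat..}. {replicate k Ups})
       \<and> RW (ext_id \<sigma>) \<inter> TT = bst_seq \<sigma>"
proof -
  interpret nat_permutation \<sigma>
    using assms by unfold_locales
  have "(\<Union>k\<in>{1::nat..}. {replicate k Ups}) \<inter> TT = {}"
    by (auto simp: TT_def)
  then have "RW (ext_id \<sigma>) \<inter> TT = bst_seq \<sigma>"
    unfolding RW_ext_id UN_one_pow_neg Int_Un_distrib2 using bst_seq_subset_TT by blast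
  then show ?thesis
    unfolding RW_ext_id UN_one_pow_neg by simp
qed

end
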